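(* Let $p$ be a prime and let $c_1,c_2,\lambda\in\mathbf{Q}_p$ with $c_2\neq 0$ and $\lambda\neq 0$. Let $(a_n)_{n\ge 0}$ be the sequence $a_n=(c_1+c_2 n)\lambda^n$, and let $K$ be its Kepler set. Then $$K=\begin{cases}\lambda\left(1+\dfrac{c_2}{c_1}+\left(\dfrac{c_2}{c_1}\right)^2\mathbf{Z}_p\right), & |c_1|_p>|c_2|_p,\\[2mm] \mathbf{Q}_p\setminus \lambda\left(1+p\mathbf{Z}_p\right), & |c_1|_p\le |c_2|_p.\end{cases}$$
   Context: The Kepler set of a sequence $(a_n)_{n\ge0}$ in $\mathbf{Q}_p$ is the closure in $\mathbf{Q}_p$ of the set of consecutive ratios $\{a_{n+1}/a_n : n\ge 0,\ a_n\neq 0\}$. For $x\in\mathbf{Q}_p$ and a set $A\subseteq\mathbf{Q}_p$, $xA=\{xa:a\in A\}$ and $x+A=\{x+a:a\in A\}$. *)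

theory Defs
  imports Complex_Main "HOL-Computational_Algebra.Primes"
begin

definition padic_abs_rat :: "nat \<Rightarrow> rat \<Rightarrow> real" where
  "padic_abs_rat p q =
     (if q = 0 then 0
      else (let (a, b) = quotient_of q in
            real p powr (- (real (multiplicity (int p) a) - real (multiplicity (int p) b)))))"

text \<open>(F, N) is a model of Q_p: a field of characteristic 0 with a non-archimedean
  absolute value N extending the p-adic absolute value on Q, in which Q is dense and
  which is complete.  Such a pair is unique up to isometric field isomorphism
  (it is the completion of Q at p), so quantifying over all of them is the same as
  speaking about Q_p.\<close>
definition is_Qp :: "nat \<Rightarrow> ('a::field_char_0 \<Rightarrow> real) \<Rightarrow> bool" where
  "is_Qp p N \<longleftrightarrow>
     (\<forall>x. N x = 0 \<longleftrightarrow> x = 0) \<and>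
     (\<forall>x y. N (x * y) = N x * N y) \<and>
     (\<forall>x y. N (x + y) \<le> max (N x) (N y)) \<and>
     (\<forall>q. N (of_rat q) = padic_abs_rat p q) \<and>
     (\<forall>x e. e > 0 \<longrightarrow> (\<exists>q. N (x - of_rat q) < e)) \<and>
     (\<forall>X :: nat \<Rightarrow> 'a. (\<forall>e>0. \<exists>M. \<forall>m\<ge>M. \<forall>n\<ge>M. N (X m - X n) < e) \<longrightarrow>
        (\<exists>L. \<forall>e>0. \<exists>M. \<forall>n\<ge>M. N (X n - L) < e))"

definition Nclosure :: "('a::ab_group_add \<Rightarrow> real) \<Rightarrow> 'a set \<Rightarrow> 'a set" where
  "Nclosure N A = {x. \<forall>e>0. \<exists>a\<in>A. N (x - a) < e}"

definition kepler_set :: "('a::field \<Rightarrow> real) \<Rightarrow> (nat \<Rightarrow> 'a) \<Rightarrow> 'a set" where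
  "kepler_set N a = Nclosure N {a (Suc n) / a n | n. a n \<noteq> 0}"

definition Zp :: "('a \<Rightarrow> real) \<Rightarrow> 'a set" where
  "Zp N = {x. N x \<le> 1}"

end

theory Submission
  imports Defs "HOL-Number_Theory.Cong"
begin

text \<open>With s = c1/c2 the consecutive ratios are lam (1 + 1/(s + n)), so the Kepler set is the
  image under z \<mapsto> lam (1 + z) of the closure of the inverses of the nonzero points s + n.
  Since the naturals are dense in Zp, these points are dense in the ball s + Zp.
  If |s| > 1 this ball avoids 0, and inversion maps it onto the ball of radius |s|^-2 around 1/s
  while scaling all distances by |s|^-2, so it commutes with taking closures.
  If |s| \<le> 1 the ball is Zp itself; inverting a dense subset of Zp gives a dense subset of
  {|v| \<ge> 1}, which is the complement of pZp because the values of |.| are powers of p.\<close>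

definition Nball :: "('a::ab_group_add \<Rightarrow> real) \<Rightarrow> 'a \<Rightarrow> real \<Rightarrow> 'a set" where
  "Nball N c r = {x. N (x - c) \<le> r}"

lemma Zp_eq_Nball: "Zp N = Nball N 0 1"
  by (simp add: Zp_def Nball_def)

lemma Nclosure_mono: "A \<subseteq> B \<Longrightarrow> Nclosure N A \<subseteq> Nclosure N B"
  unfolding Nclosure_def by blast

lemma mem_affine_image_iff:
  fixes a b :: "'a::field"
  assumes "b \<noteq> 0"
  shows "x \<in> (\<lambda>z. a + b * z) ` S \<longleftrightarrow> (x - a) / b \<in> S"
proof
  assume "x \<in> (\<lambda>z. a + b * z) ` S"
  then show "(x - a) / b \<in> S"
    using assms by auto
next
  assume "(x - a) / b \<in> S"
  then show "x \<in> (\<lambda>z. a + b * z) ` S"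
    using assms by (intro image_eqI[where x = "(x - a) / b"]) auto
qed

lemma affine_image_Compl:
  fixes a b :: "'a::field"
  assumes "b \<noteq> 0"
  shows "(\<lambda>z. a + b * z) ` (- S) = - ((\<lambda>z. a + b * z) ` S)"
  by (rule set_eqI) (simp add: mem_affine_image_iff[OF assms])

lemma linear_geometric_ratios:
  fixes c1 c2 lam :: "'a::field"
  assumes "c2 \<noteq> 0" "lam \<noteq> 0"
  shows "{(c1 + c2 * of_nat (Suc n)) * lam ^ Suc n / ((c1 + c2 * of_nat n) * lam ^ n) | n.
            (c1 + c2 * of_nat n) * lam ^ n \<noteq> 0}
    = (\<lambda>z. lam + lam * z) ` inverse ` (range (\<lambda>n. c1 / c2 + of_nat n) - {0})"
proof -
  have factor: "c1 + c2 * of_nat n = c2 * (c1 / c2 + of_nat n)" for n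
    using assms(1) by (simp add: algebra_simps)
  have nonzero: "(c1 + c2 * of_nat n) * lam ^ n \<noteq> 0 \<longleftrightarrow> c1 / c2 + of_nat n \<noteq> 0" for n
    using assms by (simp add: factor)
  have ratio: "(c1 + c2 * of_nat (Suc n)) * lam ^ Suc n / ((c1 + c2 * of_nat n) * lam ^ n)
      = lam + lam * inverse (c1 / c2 + of_nat n)" if "c1 / c2 + of_nat n \<noteq> 0" for n
  proof -
    define u where "u = c1 / c2 + of_nat n"
    have "u \<noteq> 0"
      using that unfolding u_def .
    have "(c1 + c2 * of_nat (Suc n)) * lam ^ Suc n / ((c1 + c2 * of_nat n) * lam ^ n)
        = (c2 * (u + 1) * (lam * lam ^ n)) / (c2 * u * lam ^ n)"
      unfolding factor u_def by (simp add: add.assoc)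
    also have "\<dots> = lam + lam * inverse u"
      using assms \<open>u \<noteq> 0\<close> by (simp add: field_simps)
    finally show ?thesis
      unfolding u_def .
  qed
  have "{(c1 + c2 * of_nat (Suc n)) * lam ^ Suc n / ((c1 + c2 * of_nat n) * lam ^ n) | n.
            (c1 + c2 * of_nat n) * lam ^ n \<noteq> 0}
      = (\<lambda>n. lam + lam * inverse (c1 / c2 + of_nat n)) ` {n. c1 / c2 + of_nat n \<noteq> 0}"
    unfolding setcompr_eq_image nonzero by (intro image_cong refl ratio) simp
  also have "\<dots> = (\<lambda>z. lam + lam * z) ` inverse ` (range (\<lambda>n. c1 / c2 + of_nat n) - {0})"
    by blast
  finally show ?thesis .
qed

locale nonarch_abs =
  fixes N :: "'a::field \<Rightarrow> real"
  assumes N_nonneg [simp]: "0 \<le> N x"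
    and N_eq_0_iff [simp]: "N x = 0 \<longleftrightarrow> x = 0"
    and N_mult: "N (x * y) = N x * N y"
    and N_add_le_max: "N (x + y) \<le> max (N x) (N y)"
begin

lemma N_0 [simp]: "N 0 = 0"
  by simp

lemma N_pos_iff [simp]: "0 < N x \<longleftrightarrow> x \<noteq> 0"
  using N_nonneg[of x] N_eq_0_iff[of x] by linarith

lemma N_1 [simp]: "N 1 = 1"
  using N_mult[of 1 1] N_pos_iff[of 1] by simp

lemma N_minus [simp]: "N (- x) = N x"
proof -
  have "N (-1) * N (-1) = 1"
    using N_mult[of "-1" "-1"] by simp
  then have "N (-1) = 1"
    using N_nonneg[of "-1"] by (metis abs_of_nonneg abs_square_eq_1 power2_eq_square)
  then show ?thesis
    using N_mult[of "-1" x] by simp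
qed

lemma N_minus_commute: "N (x - y) = N (y - x)"
  using N_minus[of "x - y"] by simp

lemma N_inverse [simp]: "N (inverse x) = inverse (N x)"
  by (cases "x = 0") (simp_all add: N_mult[symmetric] field_simps)

lemma N_divide [simp]: "N (x / y) = N x / N y"
  by (simp add: divide_inverse N_mult)

lemma N_power [simp]: "N (x ^ n) = N x ^ n"
  by (induction n) (simp_all add: N_mult)

lemma N_diff_le_max: "N (x - z) \<le> max (N (x - y)) (N (y - z))"
  using N_add_le_max[of "x - y" "y - z"] by simp

lemma N_diff_le_add: "N (x - z) \<le> N (x - y) + N (y - z)"
  using N_diff_le_max[of x z y] N_nonneg[of "x - y"] N_nonneg[of "y - z"] by linarith

lemma N_add_eq_right: "N x < N y \<Longrightarrow> N (x + y) = N y"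
  using N_add_le_max[of x y] N_add_le_max[of "x + y" "- x"] by simp

lemma N_eq_if_close: "N (x - y) < N y \<Longrightarrow> N x = N y"
  using N_add_eq_right[of "x - y" y] by simp

lemma N_of_nat_le_1: "N (of_nat n) \<le> 1"
proof (induction n)
  case (Suc n)
  then show ?case
    using N_add_le_max[of 1 "of_nat n"] by simp
qed simp

lemma N_of_int_le_1: "N (of_int a) \<le> 1"
  using N_of_nat_le_1[of "nat \<bar>a\<bar>"] N_minus[of "of_int a"]
  by (cases "0 \<le> a") (simp_all add: of_nat_nat)

lemma N_inverse_diff: "x \<noteq> 0 \<Longrightarrow> y \<noteq> 0 \<Longrightarrow> N (inverse x - inverse y) = N (x - y) / (N x * N y)"
  by (simp add: inverse_diff_inverse N_mult N_minus_commute[of x] field_simps)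

lemma subset_Nclosure: "A \<subseteq> Nclosure N A"
  unfolding Nclosure_def by force

lemma Nclosure_Nball [simp]: "Nclosure N (Nball N c r) = Nball N c r"
proof
  show "Nclosure N (Nball N c r) \<subseteq> Nball N c r"
  proof
    fix x assume x: "x \<in> Nclosure N (Nball N c r)"
    have "N (x - c) \<le> r + e" if "0 < e" for e
    proof -
      obtain a where "N (a - c) \<le> r" "N (x - a) < e"
        using x \<open>0 < e\<close> unfolding Nclosure_def Nball_def by blast
      then show ?thesis
        using N_diff_le_add[of x c a] by linarith
    qed
    then show "x \<in> Nball N c r"
      unfolding Nball_def by (auto intro: field_le_epsilon)
  qed
qed (rule subset_Nclosure)

lemma Nclosure_N_ge [simp]:
  assumes "0 < r"
  shows "Nclosure N {x. r \<le> N x} = {x. r \<le> N x}"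
proof
  show "Nclosure N {x. r \<le> N x} \<subseteq> {x. r \<le> N x}"
  proof
    fix x assume "x \<in> Nclosure N {x. r \<le> N x}"
    then obtain a where "r \<le> N a" "N (x - a) < r"
      using assms unfolding Nclosure_def by blast
    then show "x \<in> {x. r \<le> N x}"
      using N_eq_if_close[of x a] by simp
  qed
qed (rule subset_Nclosure)

lemma Nball_eq_Nball:
  assumes "N (c - d) \<le> r"
  shows "Nball N c r = Nball N d r"
proof -
  have "N (x - c) \<le> r \<longleftrightarrow> N (x - d) \<le> r" for x
    using N_diff_le_max[of x c d] N_diff_le_max[of x d c] N_minus_commute[of c d] assms
    by linarith
  then show ?thesis
    unfolding Nball_def by blast
qed

lemma Nclosure_image_similarity:
  assumes "A \<subseteq> B" and "f ` B = B'"
    and "Nclosure N B \<subseteq> B" and "Nclosure N B' \<subseteq> B'"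
    and "0 < C" and scale: "\<And>x y. x \<in> B \<Longrightarrow> y \<in> B \<Longrightarrow> N (f x - f y) = C * N (x - y)"
  shows "Nclosure N (f ` A) = f ` Nclosure N A"
proof
  have closure_A: "Nclosure N A \<subseteq> B"
    using Nclosure_mono[OF assms(1)] assms(3) by blast
  show "Nclosure N (f ` A) \<subseteq> f ` Nclosure N A"
  proof
    fix x assume x: "x \<in> Nclosure N (f ` A)"
    moreover have "Nclosure N (f ` A) \<subseteq> B'"
      using Nclosure_mono[of "f ` A" B' N] assms(1,2,4) by blast
    ultimately obtain y where y: "y \<in> B" "x = f y"
      using assms(2) by blast
    have "\<exists>a\<in>A. N (y - a) < e" if "0 < e" for e
    proof -
      obtain a where "a \<in> A" "N (f y - f a) < C * e"
        using x y(2) mult_pos_pos[OF \<open>0 < C\<close> \<open>0 < e\<close>] unfolding Nclosure_def by blast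
      moreover have "N (f y - f a) = C * N (y - a)"
        using scale[OF y(1), of a] \<open>a \<in> A\<close> assms(1) by blast
      ultimately show ?thesis
        using assms(5) by auto
    qed
    then show "x \<in> f ` Nclosure N A"
      using y(2) unfolding Nclosure_def by blast
  qed
  show "f ` Nclosure N A \<subseteq> Nclosure N (f ` A)"
  proof
    fix x assume "x \<in> f ` Nclosure N A"
    then obtain y where y: "y \<in> Nclosure N A" "x = f y"
      by blast
    have "\<exists>a\<in>f ` A. N (x - a) < e" if "0 < e" for e
    proof -
      obtain a where "a \<in> A" "N (y - a) < e / C"
        using y(1) divide_pos_pos[OF \<open>0 < e\<close> \<open>0 < C\<close>] unfolding Nclosure_def by blast
      moreover have "N (f y - f a) = C * N (y - a)"
        using scale[of y a] y(1) \<open>a \<in> A\<close> closure_A assms(1) by blast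
      ultimately have "N (f y - f a) < e"
        using assms(5) by (simp add: field_simps)
      then show ?thesis
        using y(2) \<open>a \<in> A\<close> by blast
    qed
    then show "x \<in> Nclosure N (f ` A)"
      unfolding Nclosure_def by blast
  qed
qed

lemma Nclosure_affine_image:
  assumes "b \<noteq> 0"
  shows "Nclosure N ((\<lambda>z. a + b * z) ` A) = (\<lambda>z. a + b * z) ` Nclosure N A"
  by (rule Nclosure_image_similarity[where B = UNIV and B' = UNIV and C = "N b"])
    (use assms mem_affine_image_iff[OF assms, of _ a UNIV] in
      \<open>auto simp: N_mult[symmetric] right_diff_distrib\<close>)

lemma affine_image_Nball:
  assumes "b \<noteq> 0"
  shows "(\<lambda>z. a + b * z) ` Nball N c r = Nball N (a + b * c) (N b * r)"
proof -
  have "x - (a + b * c) = b * ((x - a) / b - c)" for x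
    using assms by (simp add: field_simps)
  then have "x \<in> Nball N (a + b * c) (N b * r) \<longleftrightarrow> (x - a) / b \<in> Nball N c r" for x
    using assms by (simp add: Nball_def N_mult)
  then show ?thesis
    using mem_affine_image_iff[OF assms] by blast
qed

lemma inverse_Nball_radius_less:
  assumes "0 \<le> r" "r < N s"
  shows "r / N s ^ 2 < N (inverse s)"
proof -
  have "0 < N s"
    using assms by linarith
  then show ?thesis
    using assms by (simp add: power2_eq_square field_simps)
qed

lemma inverse_mem_Nball_iff:
  assumes "0 \<le> r" "r < N s" "x \<noteq> 0"
  shows "inverse x \<in> Nball N (inverse s) (r / N s ^ 2) \<longleftrightarrow> x \<in> Nball N s r"
proof -
  have s: "s \<noteq> 0"
    using assms(1,2) by (cases "s = 0") simp_all
  then have Ns: "0 < N s"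
    by simp
  have close: "N x = N s" if "inverse x \<in> Nball N (inverse s) (r / N s ^ 2) \<or> x \<in> Nball N s r"
  proof (cases "x \<in> Nball N s r")
    case True
    then have "N (x - s) < N s"
      using assms(2) by (simp add: Nball_def)
    then show ?thesis
      by (rule N_eq_if_close)
  next
    case False
    then have "N (inverse x - inverse s) < N (inverse s)"
      using that inverse_Nball_radius_less[OF assms(1,2)] by (simp add: Nball_def)
    then have "N (inverse x) = N (inverse s)"
      by (rule N_eq_if_close)
    then show ?thesis
      by simp
  qed
  have dist: "N (inverse x - inverse s) = N (x - s) / N s ^ 2" if "N x = N s"
    using N_inverse_diff[OF assms(3) s] that by (simp add: power2_eq_square)
  show ?thesis
    using close dist Ns by (auto simp: Nball_def divide_le_cancel)
qed

lemma inverse_image_Nball: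
  assumes "0 \<le> r" "r < N s"
  shows "inverse ` Nball N s r = Nball N (inverse s) (r / N s ^ 2)"
proof (intro set_eqI iffI)
  fix y assume "y \<in> inverse ` Nball N s r"
  then obtain x where x: "x \<in> Nball N s r" "y = inverse x"
    by blast
  moreover have "x \<noteq> 0"
    using x(1) assms(2) by (auto simp: Nball_def)
  ultimately show "y \<in> Nball N (inverse s) (r / N s ^ 2)"
    using inverse_mem_Nball_iff[OF assms] by blast
next
  fix y assume y: "y \<in> Nball N (inverse s) (r / N s ^ 2)"
  then have "y \<noteq> 0"
    using inverse_Nball_radius_less[OF assms] by (auto simp: Nball_def)
  then have "inverse y \<in> Nball N s r"
    using inverse_mem_Nball_iff[OF assms, of "inverse y"] y by simp
  then show "y \<in> inverse ` Nball N s r"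
    by (rule image_eqI[rotated]) simp
qed

lemma N_inverse_diff_in_Nball:
  assumes "r < N s" "x \<in> Nball N s r" "y \<in> Nball N s r"
  shows "N (inverse x - inverse y) = 1 / N s ^ 2 * N (x - y)"
proof -
  have Nxy: "N x = N s" "N y = N s"
    using assms N_eq_if_close[of x s] N_eq_if_close[of y s] unfolding Nball_def by simp_all
  have "N (x - s) \<le> r"
    using assms(2) by (simp add: Nball_def)
  then have "0 < N s"
    using assms(1) N_nonneg[of "x - s"] by linarith
  then have "x \<noteq> 0" "y \<noteq> 0"
    using Nxy by auto
  then show ?thesis
    using N_inverse_diff[of x y] Nxy by (simp add: power2_eq_square)
qed

lemma Nclosure_inverse_image_Nball:
  assumes "0 < r" "r < N s" "A \<subseteq> Nball N s r"
  shows "Nclosure N (inverse ` A) = inverse ` Nclosure N A"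
proof (rule Nclosure_image_similarity[where B = "Nball N s r" and C = "1 / N s ^ 2"])
  show "inverse ` Nball N s r = Nball N (inverse s) (r / N s ^ 2)"
    using assms(1,2) by (simp add: inverse_image_Nball)
  have "0 < N s"
    using assms(1,2) by linarith
  then show "0 < 1 / N s ^ 2"
    by simp
qed (use assms N_inverse_diff_in_Nball in simp_all)

lemma Nclosure_inverse_dense_Zp:
  assumes "D \<subseteq> Zp N" "Zp N \<subseteq> Nclosure N D"
  shows "Nclosure N (inverse ` (D - {0})) = {v. 1 \<le> N v}"
proof
  have "1 \<le> N (inverse d)" if "d \<in> D - {0}" for d
  proof -
    have "N d \<le> 1"
      using assms(1) that unfolding Zp_def by blast
    then show ?thesis
      using that by (simp add: one_le_inverse)
  qed
  then have "Nclosure N (inverse ` (D - {0})) \<subseteq> Nclosure N {v. 1 \<le> N v}"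
    by (intro Nclosure_mono) blast
  then show "Nclosure N (inverse ` (D - {0})) \<subseteq> {v. 1 \<le> N v}"
    by simp
next
  show "{v. 1 \<le> N v} \<subseteq> Nclosure N (inverse ` (D - {0}))"
  proof
    fix v assume "v \<in> {v. 1 \<le> N v}"
    then have Nv: "1 \<le> N v" by simp
    define x where "x = inverse v"
    have x: "0 < N x" "x \<in> Zp N"
      using Nv unfolding x_def Zp_def by (auto simp: inverse_le_1_iff)
    have "\<exists>a\<in>inverse ` (D - {0}). N (v - a) < e" if "0 < e" for e
    proof -
      have "0 < min (N x) (e * N x ^ 2)"
        using x(1) \<open>0 < e\<close> by (simp add: zero_less_mult_iff)
      moreover have "x \<in> Nclosure N D"
        using assms(2) x(2) by blast
      ultimately obtain d where d: "d \<in> D" "N (x - d) < min (N x) (e * N x ^ 2)"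
        unfolding Nclosure_def by blast
      then have "N (d - x) < N x"
        using N_minus_commute[of x d] by simp
      then have Nd: "N d = N x"
        by (rule N_eq_if_close)
      then have "d \<noteq> 0" "x \<noteq> 0"
        using x by auto
      then have "N (v - inverse d) = N (x - d) / N x ^ 2"
        using N_inverse_diff[of x d] Nd unfolding x_def by (simp add: power2_eq_square)
      also have "\<dots> < e"
        using d(2) x(1) by (simp add: pos_divide_less_eq)
      finally show ?thesis
        using d(1) \<open>d \<noteq> 0\<close> by blast
    qed
    then show "v \<in> Nclosure N (inverse ` (D - {0}))"
      unfolding Nclosure_def by blast
  qed
qed

lemma kepler_set_linear_geometric:
  assumes "c2 \<noteq> 0" "lam \<noteq> 0"
  shows "kepler_set N (\<lambda>n. (c1 + c2 * of_nat n) * lam ^ n) =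
    (\<lambda>z. lam + lam * z) ` Nclosure N (inverse ` (range (\<lambda>n. c1 / c2 + of_nat n) - {0}))"
  unfolding kepler_set_def linear_geometric_ratios[OF assms] by (rule Nclosure_affine_image[OF assms(2)])

end

lemma padic_abs_rat_nonneg: "0 \<le> padic_abs_rat p q"
  unfolding padic_abs_rat_def by (auto split: prod.splits)

lemma padic_abs_rat_eq_powr:
  assumes "q \<noteq> 0"
  shows "\<exists>k::int. padic_abs_rat p q = real p powr k"
proof -
  obtain a b where "quotient_of q = (a, b)"
    by fastforce
  then have "padic_abs_rat p q =
      real p powr of_int (int (multiplicity (int p) b) - int (multiplicity (int p) a))"
    using assms unfolding padic_abs_rat_def by simp
  then show ?thesis
    by blast
qed

lemma is_QpD:
  assumes "is_Qp p N"
  shows "N x = 0 \<longleftrightarrow> x = 0" and "N (x * y) = N x * N y" and "N (x + y) \<le> max (N x) (N y)"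
    and "N (of_rat q) = padic_abs_rat p q" and "0 < e \<Longrightarrow> \<exists>q. N (x - of_rat q) < e"
  using assms unfolding is_Qp_def by blast+

locale padic =
  fixes p :: nat and N :: "'a::field_char_0 \<Rightarrow> real"
  assumes prime_p: "prime p" and is_Qp: "is_Qp p N"
begin

lemma N_of_rat: "N (of_rat q) = padic_abs_rat p q"
  using is_QpD(4)[OF is_Qp] .

lemma N_approx_of_rat: "0 < e \<Longrightarrow> \<exists>q. N (x - of_rat q) < e"
  using is_QpD(5)[OF is_Qp] .

sublocale nonarch_abs N
proof
  \<comment> \<open>is_Qp omits nonnegativity: it follows from N (-1) = 1, where N (-1) \<ge> 0 as the value of a rational.\<close>
  note N_eq_0_iff = is_QpD(1)[OF is_Qp]
  note N_mult = is_QpD(2)[OF is_Qp]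
  note N_add_le_max = is_QpD(3)[OF is_Qp]
  show "N (x * y) = N x * N y" "N (x + y) \<le> max (N x) (N y)" for x y
    by (fact N_mult N_add_le_max)+
  have "N 1 * N 1 = N 1" "N 1 \<noteq> 0"
    using N_mult[of 1 1] N_eq_0_iff[of 1] by simp_all
  then have "N (-1) * N (-1) = 1"
    using N_mult[of "-1" "-1"] by simp
  moreover have "0 \<le> N (-1)"
    using N_of_rat[of "-1"] padic_abs_rat_nonneg[of p "-1"] by simp
  ultimately have "N (-1) = 1"
    by (metis abs_of_nonneg abs_square_eq_1 power2_eq_square)
  then show "0 \<le> N x" for x
    using N_add_le_max[of x "-x"] N_mult[of "-1" x] N_eq_0_iff[of 0] by simp
  show "N x = 0 \<longleftrightarrow> x = 0" for x
    by (rule N_eq_0_iff)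
qed

lemma p_gt_1: "1 < real p"
  using prime_gt_1_nat[OF prime_p] by simp

lemma N_of_int: "N (of_int a) = (if a = 0 then 0 else real p powr - real (multiplicity (int p) a))"
  using N_of_rat[of "of_int a"] unfolding padic_abs_rat_def by (simp add: quotient_of_int)

lemma N_of_int_eq_1: "\<not> int p dvd a \<Longrightarrow> N (of_int a) = 1"
  using p_gt_1 by (auto simp: N_of_int not_dvd_imp_multiplicity_0)

lemma N_of_nat_p: "N (of_nat p) = 1 / real p"
proof -
  have "multiplicity (int p) (int p) = 1"
    using prime_p by (intro multiplicity_self) (auto simp: prime_gt_0_nat prime_nat_iff_prime)
  then show ?thesis
    using N_of_int[of "int p"] p_gt_1 by (simp add: powr_minus divide_inverse)
qed

lemma N_of_int_le_if_dvd:
  assumes "int p dvd a"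
  shows "N (of_int a) \<le> 1 / real p"
proof -
  obtain c where "a = int p * c"
    using assms ..
  then have "N (of_int a) = 1 / real p * N (of_int c)"
    by (simp add: N_mult N_of_nat_p)
  also have "\<dots> \<le> 1 / real p"
    using N_of_int_le_1[of c] p_gt_1 by (simp add: divide_right_mono)
  finally show ?thesis .
qed

lemma N_eq_powr:
  assumes "x \<noteq> 0"
  shows "\<exists>k::int. N x = real p powr k"
proof -
  have "0 < N x"
    using assms by simp
  then obtain q where "N (x - of_rat q) < N x"
    using N_approx_of_rat by blast
  then have "N (of_rat q - x) < N x"
    using N_minus_commute[of x "of_rat q"] by simp
  then have "N (of_rat q) = N x"
    by (rule N_eq_if_close)
  then have "padic_abs_rat p q = N x" "q \<noteq> 0"
    using N_of_rat[of q] assms by auto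
  then show ?thesis
    using padic_abs_rat_eq_powr by metis
qed

lemma N_ge_1_if_greater:
  assumes "1 / real p < N x"
  shows "1 \<le> N x"
proof -
  have "x \<noteq> 0"
    using assms p_gt_1 by (cases "x = 0") simp_all
  then obtain k :: int where k: "N x = real p powr k"
    using N_eq_powr by blast
  have "real p powr (-1) < real p powr k"
    using assms k p_gt_1 by (simp add: powr_minus divide_inverse)
  then have "- 1 < real_of_int k"
    by (simp only: powr_less_cancel_iff[OF p_gt_1])
  then have "0 \<le> k"
    by simp
  then show ?thesis
    using k p_gt_1 by (simp add: ge_one_powr_ge_zero)
qed

lemma N_ge_1_eq_Compl_Nball: "{x. 1 \<le> N x} = - Nball N 0 (1 / real p)"
proof -
  have "1 / real p < 1"
    using p_gt_1 by simp
  then show ?thesis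
    using N_ge_1_if_greater by (auto simp: Nball_def not_le)
qed

lemma quotient_of_denom_not_dvd:
  assumes q: "quotient_of q = (a, b)" and "N (of_rat q) \<le> 1"
  shows "\<not> int p dvd b"
proof
  assume "int p dvd b"
  have "\<not> is_unit (int p)"
    using prime_gt_1_nat[OF prime_p] by simp
  with \<open>int p dvd b\<close> have "\<not> int p dvd a"
    using coprime_common_divisor[OF quotient_of_coprime[OF q]] by blast
  then have "N (of_int a) = 1"
    by (rule N_of_int_eq_1)
  moreover have "N (of_rat q) = N (of_int a) / N (of_int b)"
    using quotient_of_div[OF q] by (simp add: of_rat_divide)
  ultimately have Nq: "N (of_rat q) = 1 / N (of_int b)"
    by simp
  have "0 < N (of_int b)"
    using quotient_of_denom_pos[OF q] by simp
  then have "1 / (1 / real p) \<le> 1 / N (of_int b)"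
    using N_of_int_le_if_dvd[OF \<open>int p dvd b\<close>] p_gt_1
    by (intro divide_left_mono mult_pos_pos) simp_all
  then have "real p \<le> N (of_rat q)"
    using Nq by simp
  then show False
    using assms(2) p_gt_1 by simp
qed

lemma exists_nat_close_to_quotient:
  assumes "\<not> int p dvd b"
  shows "\<exists>n. N (of_int a / of_int b - of_nat n) \<le> (1 / real p) ^ k"
proof -
  have "coprime b (int p ^ k)"
    using prime_imp_coprime[of "int p" b] prime_p assms by (simp add: ac_simps)
  then obtain u where u: "[b * u = 1] (mod int p ^ k)"
    using cong_solve_coprime_int by blast
  define m where "m = a * u mod int p ^ k"
  have "0 \<le> m"
    using prime_gt_0_nat[OF prime_p] unfolding m_def by simp
  have "[m * b = a * u * b] (mod int p ^ k)"
    unfolding m_def by (intro cong_scalar_right) simp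
  also have "[a * u * b = a * 1] (mod int p ^ k)"
    using cong_mult[OF cong_refl[of a] u] by (simp add: ac_simps)
  finally obtain c where c: "a - m * b = int p ^ k * c"
    by (metis cong_iff_dvd_diff cong_sym dvdE mult_1_right)
  then have "(of_int a :: 'a) = of_int (int p ^ k * c) + of_int m * of_int b"
    by (simp flip: of_int_mult of_int_add)
  moreover have "b \<noteq> 0"
    using assms by auto
  ultimately have "of_int a / of_int b - of_nat (nat m) = (of_int (int p ^ k * c) / of_int b :: 'a)"
    using \<open>0 \<le> m\<close> by (simp add: field_simps)
  moreover have "N (of_int b) = 1"
    using N_of_int_eq_1[OF assms] .
  ultimately have "N (of_int a / of_int b - of_nat (nat m)) = (1 / real p) ^ k * N (of_int c)"
    by (simp add: N_mult N_of_nat_p)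
  also have "\<dots> \<le> (1 / real p) ^ k"
    using N_of_int_le_1[of c] by (simp add: mult_left_le)
  finally show ?thesis ..
qed

lemma of_nat_dense_Zp:
  assumes "x \<in> Zp N" "0 < e"
  shows "\<exists>n. N (x - of_nat n) < e"
proof -
  have "1 / real p < 1"
    using p_gt_1 by simp
  then obtain k where k: "(1 / real p) ^ k < e"
    using real_arch_pow_inv[OF assms(2)] by blast
  obtain q where q: "N (x - of_rat q) < min e 1"
    using N_approx_of_rat[of "min e 1" x] assms(2) by auto
  have "max (N (of_rat q - x)) (N x) \<le> 1"
    using q N_minus_commute[of x "of_rat q"] assms(1) by (simp add: Zp_def)
  then have "N (of_rat q) \<le> 1"
    using order.trans[OF N_diff_le_max[of "of_rat q" 0 x]] by simp
  obtain a b where ab: "quotient_of q = (a, b)"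
    by fastforce
  then obtain n where "N (of_rat q - of_nat n) \<le> (1 / real p) ^ k"
    using exists_nat_close_to_quotient[OF quotient_of_denom_not_dvd[OF ab]] \<open>N (of_rat q) \<le> 1\<close>
      quotient_of_div[OF ab] by (auto simp: of_rat_divide)
  then have "max (N (x - of_rat q)) (N (of_rat q - of_nat n)) < e"
    using q k by simp
  then have "N (x - of_nat n) < e"
    using order.strict_trans1[OF N_diff_le_max[of x "of_nat n" "of_rat q"]] by simp
  then show ?thesis ..
qed

lemma Nclosure_range_of_nat: "Nclosure N (range of_nat) = Zp N"
proof
  have "range of_nat \<subseteq> Nball N 0 1"
    using N_of_nat_le_1 by (auto simp: Nball_def)
  then show "Nclosure N (range of_nat) \<subseteq> Zp N"
    using Nclosure_mono[of "range of_nat" "Nball N 0 1" N] by (simp add: Zp_eq_Nball)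
  show "Zp N \<subseteq> Nclosure N (range of_nat)"
    using of_nat_dense_Zp unfolding Nclosure_def by blast
qed

lemma Nclosure_nat_translates: "Nclosure N (range (\<lambda>n. s + of_nat n)) = Nball N s 1"
proof -
  have "range (\<lambda>n. s + of_nat n) = (\<lambda>z. s + 1 * z) ` range of_nat"
    by auto
  then show ?thesis
    using Nclosure_affine_image[of 1 s "range of_nat"] affine_image_Nball[of 1 s 0 1]
    by (simp add: Nclosure_range_of_nat Zp_eq_Nball)
qed

lemma kepler_set_linear_geometric_Nball:
  assumes "N c2 < N c1" "c2 \<noteq> 0" "lam \<noteq> 0"
  shows "kepler_set N (\<lambda>n. (c1 + c2 * of_nat n) * lam ^ n) =
    (\<lambda>z. lam * (1 + c2 / c1 + (c2 / c1) ^ 2 * z)) ` Zp N"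
proof -
  define s where "s = c1 / c2"
  define D where "D = range (\<lambda>n. s + of_nat n)"
  have "1 < N s"
    using assms(1,2) by (simp add: s_def)
  have D: "D \<subseteq> Nball N s 1"
    using subset_Nclosure[of D] Nclosure_nat_translates[of s] by (simp add: D_def)
  moreover have "0 \<notin> Nball N s 1"
    using \<open>1 < N s\<close> by (simp add: Nball_def)
  ultimately have "D - {0} = D"
    by blast
  then have "Nclosure N (inverse ` (D - {0})) = inverse ` Nball N s 1"
    using Nclosure_inverse_image_Nball[OF _ \<open>1 < N s\<close> D] Nclosure_nat_translates[of s, folded D_def]
    by simp
  also have "\<dots> = Nball N (inverse s) (1 / N s ^ 2)"
    using \<open>1 < N s\<close> by (simp add: inverse_image_Nball)
  finally have "kepler_set N (\<lambda>n. (c1 + c2 * of_nat n) * lam ^ n) =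
      Nball N (lam + lam * inverse s) (N lam * (1 / N s ^ 2))"
    using kepler_set_linear_geometric[OF assms(2,3)] affine_image_Nball[OF assms(3)]
    by (simp add: D_def s_def)
  also have "\<dots> = (\<lambda>z. lam * (1 + inverse s) + lam * inverse s ^ 2 * z) ` Nball N 0 1"
  proof -
    have "s \<noteq> 0"
      using \<open>1 < N s\<close> by auto
    then show ?thesis
      using affine_image_Nball[of "lam * inverse s ^ 2" "lam * (1 + inverse s)" 0 1] assms(3)
      by (simp add: N_mult distrib_left power_inverse divide_inverse)
  qed
  finally show ?thesis
    by (simp add: s_def Zp_eq_Nball algebra_simps)
qed

lemma kepler_set_linear_geometric_Compl_Nball:
  assumes "N c1 \<le> N c2" "c2 \<noteq> 0" "lam \<noteq> 0"
  shows "kepler_set N (\<lambda>n. (c1 + c2 * of_nat n) * lam ^ n) =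
    UNIV - (\<lambda>z. lam * (1 + of_nat p * z)) ` Zp N"
proof -
  define s where "s = c1 / c2"
  define D where "D = range (\<lambda>n. s + of_nat n)"
  have "N s \<le> 1"
    using assms(1,2) by (simp add: s_def)
  then have "Nclosure N D = Zp N"
    using Nclosure_nat_translates[of s] Nball_eq_Nball[of s 0 1] by (simp add: D_def Zp_eq_Nball)
  then have "Nclosure N (inverse ` (D - {0})) = - Nball N 0 (1 / real p)"
    using Nclosure_inverse_dense_Zp[of D] subset_Nclosure[of D] N_ge_1_eq_Compl_Nball by simp
  then have "kepler_set N (\<lambda>n. (c1 + c2 * of_nat n) * lam ^ n) =
      - Nball N lam (N lam * (1 / real p))"
    using kepler_set_linear_geometric[OF assms(2,3)] affine_image_Compl[OF assms(3)]
      affine_image_Nball[OF assms(3), of lam 0]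
    by (simp add: D_def s_def)
  also have "\<dots> = - ((\<lambda>z. lam + lam * of_nat p * z) ` Nball N 0 1)"
    using affine_image_Nball[of "lam * of_nat p" lam 0 1] assms(3) p_gt_1
    by (simp add: N_mult N_of_nat_p)
  finally show ?thesis
    by (simp add: Compl_eq_Diff_UNIV Zp_eq_Nball algebra_simps)
qed

end

theorem theorem1:
  fixes p :: nat and N :: "'a::field_char_0 \<Rightarrow> real" and c1 c2 lam :: 'a
  assumes "prime p" and "is_Qp p N"
    and "c2 \<noteq> 0" and "lam \<noteq> 0"
  shows "kepler_set N (\<lambda>n. (c1 + c2 * of_nat n) * lam ^ n) =
    (if N c1 > N c2
     then (\<lambda>z. lam * (1 + c2 / c1 + (c2 / c1) ^ 2 * z)) ` Zp N
     else UNIV - (\<lambda>z. lam * (1 + of_nat p * z)) ` Zp N)"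
proof -
  interpret padic p N
    using assms(1,2) by unfold_locales
  show ?thesis
    using kepler_set_linear_geometric_Nball[OF _ assms(3,4)]
      kepler_set_linear_geometric_Compl_Nball[OF _ assms(3,4)]
    by (simp add: not_less)
qed

end
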